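(* Let $(J,k_1,\dots,k_J)$ be a permissible decomposition of $Q$ and $A\in I_{J,k_1,\dots,k_J}$. Then there is $\delta>0$ such that for every $B\in I_{J,k_1,\dots,k_J}$ with $\mathcal{G}(A,B)<\delta$, every geodesic $\gamma:[0,1]\to\mathbb{Q}_Q(\mathbb{R}^n)$ from $A$ to $B$ satisfies $\gamma(t)\in I_{J,k_1,\dots,k_J}$ for all $t\in[0,1]$.
   Context: $\mathbb{Q}_Q(\mathbb{R}^n)$ denotes the set of unordered $Q$-tuples of points of $\mathbb{R}^n$, written $\sum_{i=1}^Q[[a_i]]$ (two such sums are equal iff the tuples agree up to a permutation; $k[[a]]$ means $k$ copies of $a$), with metric $\mathcal{G}\big(\sum_i[[a_i]],\sum_i[[b_i]]\big)=\min_{\sigma}\big(\sum_{i}|a_i-b_{\sigma(i)}|^2\big)^{1/2}$ over permutations $\sigma$. A permissible decomposition of $Q$ is a tuple $(J,k_1,\dots,k_J)$ of positive integers with $k_1\le\dots\le k_J$ and $\sum_i k_i=Q$. Every $x$ can be written uniquely as $x=\sum_{i=1}^J k_i[[x_i]]$ with $x_1,\dots,x_J$ distinct and $k_1\le\dots\le k_J$; its signature is $S(x)=(J,k_1,\dots,k_J)$, and $I_{J,k_1,\dots,k_J}=\{x:S(x)=(J,k_1,\dots,k_J)\}$. A geodesic from $A$ to $B$ is a curve $\gamma:[0,1]\to\mathbb{Q}_Q(\mathbb{R}^n)$ with $\gamma(0)=A$, $\gamma(1)=B$ and $\mathcal{G}(\gamma(s),\gamma(t))=|t-s|\,\mathcal{G}(A,B)$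 for all $s,t$. *)

theory Defs
  imports "HOL-Analysis.Analysis" "HOL-Library.Multiset"
begin

text \<open>Q-points of a Euclidean space 'a (standing for R^n): unordered Q-tuples,
  represented as multisets of size Q.\<close>

definition QPoints :: "nat \<Rightarrow> 'a multiset set" where
  "QPoints Q = {x. size x = Q}"

definition Gdist :: "'a::euclidean_space multiset \<Rightarrow> 'a multiset \<Rightarrow> real" where
  "Gdist X Y = Min {sqrt (\<Sum>i<length xs. (norm (xs ! i - ys ! i))\<^sup>2) | xs ys.
                      mset xs = X \<and> mset ys = Y}"

definition permissible :: "nat \<Rightarrow> nat \<times> nat list \<Rightarrow> bool" where
  "permissible Q d \<longleftrightarrow> (case d of (J, ks) \<Rightarrow>
      J \<ge> 1 \<and> length ks = J \<and> (\<forall>k \<in> set ks. k > 0) \<and> sorted ks \<and> sum_list ks = Q)"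

definition signature :: "'a multiset \<Rightarrow> nat \<times> nat list" where
  "signature x = (card (set_mset x), sorted_list_of_multiset (image_mset (count x) (mset_set (set_mset x))))"

definition stratum :: "nat \<Rightarrow> nat \<times> nat list \<Rightarrow> 'a multiset set" where
  "stratum Q d = {x \<in> QPoints Q. signature x = d}"

definition is_geodesic ::
  "nat \<Rightarrow> (real \<Rightarrow> 'a::euclidean_space multiset) \<Rightarrow> 'a multiset \<Rightarrow> 'a multiset \<Rightarrow> bool" where
  "is_geodesic Q \<gamma> A B \<longleftrightarrow> (\<forall>t\<in>{0..1}. \<gamma> t \<in> QPoints Q) \<and> \<gamma> 0 = A \<and> \<gamma> 1 = B \<and>
     (\<forall>s\<in>{0..1}. \<forall>t\<in>{0..1}. Gdist (\<gamma> s) (\<gamma> t) = \<bar>t - s\<bar> * Gdist A B)"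

end

theory Submission
  imports Defs "HOL-Combinatorics.Permutations"
begin

text \<open>At every time t a geodesic from A to B is the linear interpolation, with parameter t,
  along an optimal matching of A and B: this is the equality case of the triangle inequality
  for the Euclidean distance of matched tuples. Choose \<open>\<delta>\<close> so that distinct points of A are
  at distance at least \<open>2\<delta>\<close>. If \<open>Gdist A B < \<delta>\<close>, every matched pair is closer than \<open>\<delta>\<close>,
  so each point of B is matched to exactly one point of A; since B has as many distinct points
  as A, conversely each point of A is matched to a single point of B. The interpolation
  therefore moves the distinct points of A by less than \<open>\<delta>\<close> without merging any two of them,
  and the multiplicities are preserved.\<close>

definition match_cost :: "'a::real_normed_vector list \<Rightarrow> 'a list \<Rightarrow> real" where
  "match_cost xs ys = (\<Sum>i<length xs. (norm (xs ! i - ys ! i))\<^sup>2)"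

lemma match_cost_nonneg: "match_cost xs ys \<ge> 0"
  unfolding match_cost_def by (simp add: sum_nonneg)

lemma dist_nth_le_sqrt_match_cost:
  assumes "i < length xs"
  shows "dist (xs ! i) (ys ! i) \<le> sqrt (match_cost xs ys)"
proof -
  have "(norm (xs ! i - ys ! i))\<^sup>2 \<le> match_cost xs ys"
    unfolding match_cost_def
    by (rule member_le_sum[of i "{..<length xs}" "\<lambda>i. (norm (xs ! i - ys ! i))\<^sup>2"])
       (use assms in auto)
  then show ?thesis by (simp add: dist_norm real_le_rsqrt)
qed

lemma match_cost_permute:
  assumes "mset zs = mset zs'" "length bs = length zs'"
  obtains bs' where "mset bs' = mset bs" "length bs' = length zs"
    "match_cost zs bs' = match_cost zs' bs"
proof -
  obtain p where p: "p permutes {..<length zs'}" "permute_list p zs' = zs"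
    using mset_eq_permutation[OF assms(1)] by blast
  have len: "length zs = length zs'" using assms(1) by (metis size_mset)
  have p_bs: "p permutes {..<length bs}" using p(1) assms(2) by simp
  have "match_cost zs (permute_list p bs) = (\<Sum>i<length zs'. (norm (zs' ! p i - bs ! p i))\<^sup>2)"
    unfolding match_cost_def len using p p_bs assms(2)
    by (intro sum.cong) (auto simp: permute_list_nth)
  also have "\<dots> = match_cost zs' bs"
    unfolding match_cost_def using sum.permute[OF p(1), of "\<lambda>i. (norm (zs' ! i - bs ! i))\<^sup>2"]
    by (simp add: comp_def)
  finally show ?thesis using that[of "permute_list p bs"] p_bs len assms(2) by simp
qed

lemma Gdist_candidates_finite:
  "finite {sqrt (\<Sum>i<length xs. (norm (xs ! i - ys ! i))\<^sup>2) | xs ys. mset xs = X \<and> mset ys = Y}"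
  (is "finite ?C")
proof -
  let ?P = "{xs. set xs \<subseteq> set_mset X \<and> length xs = size X} \<times>
            {ys. set ys \<subseteq> set_mset Y \<and> length ys = size Y}"
  have "finite ?P" by (intro finite_cartesian_product finite_lists_length_eq) auto
  moreover have "?C \<subseteq> (\<lambda>(xs, ys). sqrt (\<Sum>i<length xs. (norm (xs ! i - ys ! i))\<^sup>2)) ` ?P"
    by (force simp: image_iff)
  ultimately show ?thesis by (meson finite_imageI finite_subset)
qed

lemma Gdist_le_sqrt_match_cost:
  assumes "mset xs = X" "mset ys = Y"
  shows "Gdist X Y \<le> sqrt (match_cost xs ys)"
  unfolding Gdist_def match_cost_def
  by (rule Min_le[OF Gdist_candidates_finite]) (use assms in blast)

lemma Gdist_attained:
  obtains xs ys where "mset xs = X" "mset ys = Y" "Gdist X Y = sqrt (match_cost xs ys)"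
proof -
  have "{sqrt (\<Sum>i<length xs. (norm (xs ! i - ys ! i))\<^sup>2) | xs ys.
           mset xs = X \<and> mset ys = Y} \<noteq> {}"
    using ex_mset[of X] ex_mset[of Y] by blast
  from Min_in[OF Gdist_candidates_finite this] show ?thesis
    using that unfolding Gdist_def match_cost_def by auto
qed

lemma Gdist_nonneg: "Gdist X Y \<ge> 0"
  by (rule Gdist_attained[of X Y]) (simp add: match_cost_nonneg)

lemma interpolation_if_sqdist_split:
  fixes a b z :: "'i \<Rightarrow> 'a::real_inner"
  assumes "finite I" "0 \<le> t" "t \<le> 1"
    and az: "(\<Sum>i\<in>I. (norm (a i - z i))\<^sup>2) = t\<^sup>2 * G\<^sup>2"
    and zb: "(\<Sum>i\<in>I. (norm (z i - b i))\<^sup>2) = (1 - t)\<^sup>2 * G\<^sup>2"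
    and ab: "G\<^sup>2 \<le> (\<Sum>i\<in>I. (norm (a i - b i))\<^sup>2)"
  shows "\<forall>i\<in>I. z i = (1 - t) *\<^sub>R a i + t *\<^sub>R b i"
proof -
  let ?e = "\<lambda>i. (norm (z i - ((1 - t) *\<^sub>R a i + t *\<^sub>R b i)))\<^sup>2"
  have pointwise: "?e i = (1 - t)\<^sup>2 * (norm (a i - z i))\<^sup>2 + t\<^sup>2 * (norm (z i - b i))\<^sup>2
     + t * (1 - t) * ((norm (a i - z i))\<^sup>2 + (norm (z i - b i))\<^sup>2 - (norm (a i - b i))\<^sup>2)" for i
  proof -
    define u v where "u = z i - a i" and "v = z i - b i"
    have "z i - ((1 - t) *\<^sub>R a i + t *\<^sub>R b i) = (1 - t) *\<^sub>R u + t *\<^sub>R v"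
      "a i - z i = - u" "a i - b i = v - u" "z i - b i = v"
      unfolding u_def v_def by (simp_all add: algebra_simps)
    then show ?thesis unfolding norm_minus_cancel power2_norm_eq_inner
      by (simp add: power2_eq_square algebra_simps inner_commute)
  qed
  have "(\<Sum>i\<in>I. ?e i) = (1 - t)\<^sup>2 * (\<Sum>i\<in>I. (norm (a i - z i))\<^sup>2)
      + t\<^sup>2 * (\<Sum>i\<in>I. (norm (z i - b i))\<^sup>2) + t * (1 - t) * ((\<Sum>i\<in>I. (norm (a i - z i))\<^sup>2)
      + (\<Sum>i\<in>I. (norm (z i - b i))\<^sup>2) - (\<Sum>i\<in>I. (norm (a i - b i))\<^sup>2))"
    unfolding pointwise by (simp add: sum.distrib sum_distrib_left sum_subtractf algebra_simps)
  also have "\<dots> \<le> (1 - t)\<^sup>2 * (t\<^sup>2 * G\<^sup>2) + t\<^sup>2 * ((1 - t)\<^sup>2 * G\<^sup>2)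
      + t * (1 - t) * (t\<^sup>2 * G\<^sup>2 + (1 - t)\<^sup>2 * G\<^sup>2 - G\<^sup>2)"
    unfolding az zb using ab assms(2,3) by (intro add_left_mono mult_left_mono) auto
  also have "\<dots> = 0" by (simp add: power2_eq_square algebra_simps)
  finally have "(\<Sum>i\<in>I. ?e i) \<le> 0" .
  then have "\<forall>i\<in>I. ?e i = 0"
    using sum_nonneg_eq_0_iff[of I ?e] assms(1) by (simp add: sum_nonneg antisym)
  then show ?thesis by simp
qed

lemma match_cost_interpolation:
  fixes t :: real
  assumes "length bs = length as"
  defines "zs \<equiv> map2 (\<lambda>a b. (1 - t) *\<^sub>R a + t *\<^sub>R b) as bs"
  shows "match_cost as zs = t\<^sup>2 * match_cost as bs"
    and "match_cost zs bs = (1 - t)\<^sup>2 * match_cost as bs"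
proof -
  have "as ! i - zs ! i = t *\<^sub>R (as ! i - bs ! i)"
    and "zs ! i - bs ! i = (1 - t) *\<^sub>R (as ! i - bs ! i)" if "i < length as" for i
    using that assms(1) unfolding zs_def by (simp_all add: algebra_simps)
  then show "match_cost as zs = t\<^sup>2 * match_cost as bs"
    and "match_cost zs bs = (1 - t)\<^sup>2 * match_cost as bs"
    using assms(1) unfolding match_cost_def zs_def
    by (simp_all add: sum_distrib_left power_mult_distrib)
qed

lemma geodesic_point_interpolates:
  assumes geo: "is_geodesic Q \<gamma> A B" and t: "t \<in> {0..1}"
  obtains as bs where "mset as = A" "mset bs = B" "match_cost as bs = (Gdist A B)\<^sup>2"
    "\<gamma> t = mset (map2 (\<lambda>a b. (1 - t) *\<^sub>R a + t *\<^sub>R b) as bs)"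
proof -
  define G where "G = Gdist A B"
  have G_nonneg: "G \<ge> 0" unfolding G_def by (rule Gdist_nonneg)
  have ends: "\<gamma> 0 = A" "\<gamma> 1 = B" and in_QPoints: "\<forall>s\<in>{0..1}. \<gamma> s \<in> QPoints Q"
    and scaled: "\<forall>r\<in>{0..1}. \<forall>s\<in>{0..1}. Gdist (\<gamma> r) (\<gamma> s) = \<bar>s - r\<bar> * G"
    using geo unfolding is_geodesic_def G_def by auto
  have sizes: "size A = Q" "size B = Q" "size (\<gamma> t) = Q"
    using in_QPoints ends t by (force simp: QPoints_def)+
  have "Gdist A (\<gamma> t) = t * G" "Gdist (\<gamma> t) B = (1 - t) * G"
    using scaled[rule_format, of 0 t] scaled[rule_format, of t 1] ends t by auto
  moreover obtain as zs where as: "mset as = A" and zs: "mset zs = \<gamma> t"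
    and "Gdist A (\<gamma> t) = sqrt (match_cost as zs)"
    by (rule Gdist_attained)
  moreover obtain zs' bs' where "mset zs' = \<gamma> t" and bs': "mset bs' = B"
    and "Gdist (\<gamma> t) B = sqrt (match_cost zs' bs')"
    by (rule Gdist_attained)
  \<comment> \<open>Re-index the second matching so that both use the same listing \<open>zs\<close> of \<open>\<gamma> t\<close>.\<close>
  moreover obtain bs where bs: "mset bs = B" and "match_cost zs bs = match_cost zs' bs'"
    by (rule match_cost_permute[of zs zs' bs'])
       (use zs bs' \<open>mset zs' = \<gamma> t\<close> sizes in \<open>auto dest: arg_cong[of _ _ size]\<close>)
  ultimately have az: "match_cost as zs = t\<^sup>2 * G\<^sup>2" and zb: "match_cost zs bs = (1 - t)\<^sup>2 * G\<^sup>2"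
    by (metis match_cost_nonneg power_mult_distrib real_sqrt_pow2)+
  have ab: "G\<^sup>2 \<le> match_cost as bs"
    using Gdist_le_sqrt_match_cost[OF as bs] G_nonneg match_cost_nonneg unfolding G_def
    by (metis power_mono real_sqrt_pow2)
  have len: "length as = Q" "length zs = Q" "length bs = Q"
    using as zs bs sizes by (metis size_mset)+
  have zs_eq: "zs = map2 (\<lambda>a b. (1 - t) *\<^sub>R a + t *\<^sub>R b) as bs"
  proof -
    have "\<forall>i\<in>{..<Q}. zs ! i = (1 - t) *\<^sub>R as ! i + t *\<^sub>R bs ! i"
      by (rule interpolation_if_sqdist_split[where G = G])
         (use t az zb ab len in \<open>auto simp: match_cost_def\<close>)
    then show ?thesis using len by (intro nth_equalityI) auto
  qed
  have "match_cost as bs = G\<^sup>2"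
    using az zb match_cost_interpolation[of bs as t] len unfolding zs_eq by auto
  then show ?thesis
    unfolding G_def by (intro that[OF as bs]) (use zs zs_eq in auto)
qed

lemma finite_set_separated:
  fixes S :: "'a::metric_space set"
  assumes "finite S"
  obtains \<delta> where "\<delta> > 0" "\<forall>x\<in>S. \<forall>y\<in>S. x \<noteq> y \<longrightarrow> 2 * \<delta> \<le> dist x y"
proof -
  let ?D = "(\<lambda>(x, y). dist x y) ` {(x, y) \<in> S \<times> S. x \<noteq> y}"
  have "finite ?D"
    by (rule finite_imageI, rule finite_subset[of _ "S \<times> S"]) (use assms in auto)
  show ?thesis
  proof (cases "?D = {}")
    case True
    then show ?thesis using that[of 1] by auto
  next
    case False
    have "Min ?D > 0" using Min_in[OF \<open>finite ?D\<close> False] by auto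
    then show ?thesis using that[of "Min ?D / 2"] Min_le[OF \<open>finite ?D\<close>] by fastforce
  qed
qed

lemma eq_if_dist_lt_half_separation:
  assumes sep: "\<forall>x\<in>S. \<forall>y\<in>S. x \<noteq> y \<longrightarrow> 2 * \<delta> \<le> dist x y"
    and "x \<in> S" "y \<in> S" "dist p x < \<delta>" "dist p y < \<delta>"
  shows "x = y"
proof (rule ccontr)
  assume "x \<noteq> y"
  then have "2 * \<delta> \<le> dist x y" using sep assms(2,3) by auto
  moreover have "dist x y \<le> dist p x + dist p y" by (metis dist_commute dist_triangle)
  ultimately show False using assms(4,5) by auto
qed

lemma inj_on_if_displacement_lt_half_separation:
  assumes sep: "\<forall>x\<in>S. \<forall>y\<in>S. x \<noteq> y \<longrightarrow> 2 * \<delta> \<le> dist x y"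
    and moves: "\<forall>x\<in>S. dist (f x) x < \<delta>"
  shows "inj_on f S"
proof (rule inj_onI)
  fix x y assume "x \<in> S" "y \<in> S" "f x = f y"
  then show "x = y" using eq_if_dist_lt_half_separation[OF sep, of x y "f x"] moves by auto
qed

lemma close_matching_is_map:
  assumes sep: "\<forall>x\<in>set as. \<forall>y\<in>set as. x \<noteq> y \<longrightarrow> 2 * \<delta> \<le> dist x y"
    and len: "length bs = length as"
    and close: "\<forall>i<length as. dist (as ! i) (bs ! i) < \<delta>"
    and card: "card (set bs) = card (set as)"
  obtains g where "bs = map g as"
proof -
  \<comment> \<open>\<open>h\<close> is onto \<open>set as\<close>, hence injective by counting; its inverse is the required map.\<close>
  define h where "h b = (SOME a. a \<in> set as \<and> dist b a < \<delta>)" for b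
  have h_nth: "h (bs ! i) = as ! i" if "i < length as" for i
  proof -
    have near: "as ! i \<in> set as \<and> dist (bs ! i) (as ! i) < \<delta>"
      using close that by (auto simp: dist_commute)
    then have "h (bs ! i) \<in> set as \<and> dist (bs ! i) (h (bs ! i)) < \<delta>"
      unfolding h_def by (rule someI)
    then show ?thesis using eq_if_dist_lt_half_separation[OF sep] near by blast
  qed
  have "h ` set bs = set as"
  proof
    show "h ` set bs \<subseteq> set as"
      using h_nth len by (auto simp: in_set_conv_nth) blast
    show "set as \<subseteq> h ` set bs"
    proof
      fix a assume "a \<in> set as"
      then obtain i where "i < length as" "a = as ! i" by (auto simp: in_set_conv_nth)
      then show "a \<in> h ` set bs" using h_nth len by (metis image_eqI nth_mem)
    qed
  qed
  then have inj: "inj_on h (set bs)" using card by (intro eq_card_imp_inj_on) auto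
  have "bs ! i = inv_into (set bs) h (as ! i)" if "i < length as" for i
    using inv_into_f_f[OF inj, of "bs ! i"] h_nth[OF that] len that by simp
  then have "bs = map (inv_into (set bs) h) as"
    using len by (intro nth_equalityI) auto
  then show ?thesis by (rule that)
qed

lemma signature_image_mset:
  assumes "inj_on f (set_mset A)"
  shows "signature (image_mset f A) = signature A"
proof -
  have count_image: "count (image_mset f A) (f x) = count A x" if "x \<in># A" for x
  proof -
    have "f -` {f x} \<inter> set_mset A = {x}" using assms that by (auto dest: inj_onD)
    then show ?thesis by (simp add: count_image_mset)
  qed
  have "image_mset (count (image_mset f A)) (mset_set (set_mset (image_mset f A)))
      = image_mset (count (image_mset f A)) (image_mset f (mset_set (set_mset A)))"
    by (simp add: image_mset_mset_set[OF assms])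
  also have "\<dots> = image_mset (count A) (mset_set (set_mset A))"
    by (auto simp: multiset.map_comp comp_def count_image intro!: image_mset_cong)
  finally show ?thesis unfolding signature_def using card_image[OF assms] by simp
qed

lemma signature_interpolation_eq:
  fixes as bs :: "'a::real_normed_vector list"
  assumes sep: "\<forall>x\<in>set as. \<forall>y\<in>set as. x \<noteq> y \<longrightarrow> 2 * \<delta> \<le> dist x y"
    and len: "length bs = length as"
    and close: "\<forall>i<length as. dist (as ! i) (bs ! i) < \<delta>"
    and card: "card (set bs) = card (set as)"
    and t: "0 \<le> t" "t \<le> 1"
  shows "signature (mset (map2 (\<lambda>a b. (1 - t) *\<^sub>R a + t *\<^sub>R b) as bs)) = signature (mset as)"
proof -
  obtain g where bs: "bs = map g as" by (rule close_matching_is_map[OF sep len close card])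
  define f where "f x = (1 - t) *\<^sub>R x + t *\<^sub>R g x" for x
  have "dist (f x) x < \<delta>" if "x \<in> set as" for x
  proof -
    have "dist (g x) x < \<delta>"
      using that close unfolding bs by (auto simp: in_set_conv_nth dist_commute)
    moreover have "f x - x = t *\<^sub>R (g x - x)" unfolding f_def by (simp add: algebra_simps)
    then have "dist (f x) x = t * dist (g x) x" using t by (simp add: dist_norm)
    moreover have "t * dist (g x) x \<le> dist (g x) x" using t by (simp add: mult_left_le_one_le)
    ultimately show ?thesis by linarith
  qed
  then have "inj_on f (set as)" using inj_on_if_displacement_lt_half_separation[OF sep] by blast
  moreover have "map2 (\<lambda>a b. (1 - t) *\<^sub>R a + t *\<^sub>R b) as bs = map f as"
    unfolding bs f_def by (intro nth_equalityI) auto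
  ultimately show ?thesis using signature_image_mset[of f "mset as"] by simp
qed

theorem theorem3p12:
  fixes Q J :: nat and ks :: "nat list" and A :: "'a::euclidean_space multiset"
  assumes "permissible Q (J, ks)"
    and "A \<in> stratum Q (J, ks)"
  shows "\<exists>\<delta>>0. \<forall>B \<in> stratum Q (J, ks). Gdist A B < \<delta> \<longrightarrow>
           (\<forall>\<gamma>. is_geodesic Q \<gamma> A B \<longrightarrow> (\<forall>t\<in>{0..1}. \<gamma> t \<in> stratum Q (J, ks)))"
proof -
  have sizeA: "size A = Q" and sigA: "signature A = (J, ks)"
    using assms(2) by (auto simp: stratum_def QPoints_def)
  obtain \<delta> where "\<delta> > 0" and sep: "\<forall>x\<in>#A. \<forall>y\<in>#A. x \<noteq> y \<longrightarrow> 2 * \<delta> \<le> dist x y"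
    by (rule finite_set_separated[of "set_mset A"]) auto
  have "\<gamma> t \<in> stratum Q (J, ks)"
    if B: "B \<in> stratum Q (J, ks)" and close: "Gdist A B < \<delta>"
      and geo: "is_geodesic Q \<gamma> A B" and t: "t \<in> {0..1}" for B \<gamma> t
  proof -
    obtain as bs where as: "mset as = A" and bs: "mset bs = B"
      and cost: "match_cost as bs = (Gdist A B)\<^sup>2"
      and \<gamma>_t: "\<gamma> t = mset (map2 (\<lambda>a b. (1 - t) *\<^sub>R a + t *\<^sub>R b) as bs)"
      by (rule geodesic_point_interpolates[OF geo t])
    have "\<forall>i<length as. dist (as ! i) (bs ! i) < \<delta>"
      using dist_nth_le_sqrt_match_cost[of _ as bs] cost Gdist_nonneg[of A B] close
      by (simp, meson order_le_less_trans)
    moreover have "length bs = length as" and "card (set bs) = card (set as)"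
      using as bs sizeA sigA B by (auto simp: stratum_def QPoints_def signature_def)
    ultimately have "signature (\<gamma> t) = signature A"
      using signature_interpolation_eq[of as \<delta> bs t] sep t as \<gamma>_t by auto
    moreover have "\<gamma> t \<in> QPoints Q" using geo t by (auto simp: is_geodesic_def)
    ultimately show ?thesis using sigA by (simp add: stratum_def)
  qed
  with \<open>\<delta> > 0\<close> show ?thesis by blast
qed

end
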